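(* Let $X$ be an absolutely continuous real random variable, symmetric and unimodal about $0$, with cdf $F$, and let $\beta\in(0,1]$. Define $U(t)=F(t+\lambda_t^\beta)-F(t)$ and $V(t)=F(t)-F(t-\lambda_t^\beta)$. Then for every $t\in\mathbb{R}$: (a) if $t\ge0$ then $U(t)\le\beta/2\le V(t)$; (b) if $t\le0$ then $V(t)\le\beta/2\le U(t)$.
   Context: $\lambda_t^\beta=\inf\{\lambda>0: F(t+\lambda)-F(t-\lambda)\ge\beta\}$. Symmetric and unimodal about $0$ means $X$ has a density $g$ with $g(-s)=g(s)$ which is nonincreasing on $[0,\infty)$. *)

theory Defs
  imports "HOL-Probability.Probability"
begin

definition cdf_ext :: "(real \<Rightarrow> real) \<Rightarrow> ereal \<Rightarrow> real" where
  "cdf_ext F x = (case x of ereal r \<Rightarrow> F r | PInfty \<Rightarrow> 1 | MInfty \<Rightarrow> 0)"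

text \<open>lambda_t^beta = inf {lambda > 0. F(t+lambda) - F(t-lambda) >= beta}, taken in the
  extended reals so that the infimum of the empty set is +infinity.\<close>
definition lam :: "(real \<Rightarrow> real) \<Rightarrow> real \<Rightarrow> real \<Rightarrow> ereal" where
  "lam F \<beta> t = (INF l \<in> {l::real. 0 < l \<and> F (t + l) - F (t - l) \<ge> \<beta>}. ereal l)"

definition Ufun :: "(real \<Rightarrow> real) \<Rightarrow> real \<Rightarrow> real \<Rightarrow> real" where
  "Ufun F \<beta> t = cdf_ext F (ereal t + lam F \<beta> t) - F t"

definition Vfun :: "(real \<Rightarrow> real) \<Rightarrow> real \<Rightarrow> real \<Rightarrow> real" where
  "Vfun F \<beta> t = F t - cdf_ext F (ereal t - lam F \<beta> t)"

end

theory Submission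
  imports Defs
begin

text \<open>For a continuous cdf F the infimum defining \<open>\<lambda>\<^sub>t\<^sup>\<beta>\<close> is attained with
  F(t + \<lambda>) - F(t - \<lambda>) = \<beta> exactly (by the intermediate value theorem), or it is
  infinite, which forces \<beta> = 1; either way U(t) + V(t) = \<beta>. It then remains to show
  U(t) \<le> V(t) for t \<ge> 0: reflecting [t, t + l] about t onto [t - l, t] moves every
  point closer to the mode 0, so the unimodal density can only grow.\<close>

lemma tendsto_shift_at_top:
  fixes F :: "real \<Rightarrow> real"
  assumes "(F \<longlongrightarrow> a) at_top"
  shows "((\<lambda>l. F (t + l)) \<longlongrightarrow> a) at_top"
  using filterlim_tendsto_add_at_top[OF tendsto_const filterlim_ident] assms
  by (rule filterlim_compose[rotated])

lemma tendsto_reflect_at_bot: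
  fixes F :: "real \<Rightarrow> real"
  assumes "(F \<longlongrightarrow> a) at_bot"
  shows "((\<lambda>l. F (t - l)) \<longlongrightarrow> a) at_top"
proof -
  have "filterlim (\<lambda>l. t - l) at_bot at_top"
    using filterlim_tendsto_add_at_bot_iff[OF tendsto_const[of t], of "\<lambda>l. - l" at_top]
      filterlim_uminus_at_bot_at_top by simp
  then show ?thesis using assms by (rule filterlim_compose[rotated])
qed

lemma Ufun_plus_Vfun:
  fixes F :: "real \<Rightarrow> real"
  assumes mono: "mono F" and cont: "continuous_on UNIV F"
    and top: "(F \<longlongrightarrow> 1) at_top" and bot: "(F \<longlongrightarrow> 0) at_bot"
    and "0 < \<beta>" "\<beta> \<le> 1"
  shows "Ufun F \<beta> t + Vfun F \<beta> t = \<beta>"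
proof -
  define G where "G l = F (t + l) - F (t - l)" for l
  define S where "S = {l. 0 < l \<and> F (t + l) - F (t - l) \<ge> \<beta>}"
  have lam_S: "lam F \<beta> t = (INF l\<in>S. ereal l)" by (simp add: lam_def S_def)
  show ?thesis
  proof (cases "S = {}")
    case True
    have "(G \<longlongrightarrow> 1 - 0) at_top"
      unfolding G_def by (intro tendsto_diff tendsto_shift_at_top tendsto_reflect_at_bot top bot)
    moreover have "\<forall>\<^sub>F l in at_top. G l \<le> \<beta>"
      using True unfolding eventually_at_top_linorder S_def G_def
      by (intro exI[of _ 1]) (auto simp: not_le intro: less_imp_le)
    ultimately have "1 \<le> \<beta>" using tendsto_upperbound by force
    moreover have "lam F \<beta> t = \<infinity>" using True by (simp add: lam_S top_ereal_def)
    ultimately show ?thesis using \<open>\<beta> \<le> 1\<close> by (simp add: Ufun_def Vfun_def cdf_ext_def)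
  next
    case False
    have G_cont: "continuous_on UNIV G"
      unfolding G_def by (intro continuous_on_diff continuous_on_compose2[OF cont])
        (auto intro!: continuous_intros)
    have "G l \<le> 0" if "l \<le> 0" for l
      using monoD[OF mono, of "t + l" "t - l"] that by (simp add: G_def)
    then have S_eq: "S = {l. \<beta> \<le> G l}"
      using \<open>0 < \<beta>\<close> unfolding S_def G_def by (metis (lifting) linorder_not_le order.trans)
    have "closed S" unfolding S_eq by (intro closed_Collect_le continuous_on_const G_cont)
    moreover have bdd: "bdd_below S" unfolding S_def by (auto intro: bdd_belowI[of _ 0])
    ultimately have "Inf S \<in> S" using False closed_contains_Inf by blast
    then have "0 < Inf S" and "\<beta> \<le> G (Inf S)" by (auto simp: S_def G_def)
    moreover have "G 0 = 0" by (simp add: G_def)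
    ultimately obtain c where c: "0 \<le> c" "c \<le> Inf S" "G c = \<beta>"
      using IVT'[of G 0 \<beta> "Inf S"] \<open>0 < \<beta>\<close> continuous_on_subset[OF G_cont] by force
    then have "c \<in> S" unfolding S_eq by simp
    then have "G (Inf S) = \<beta>" using c cInf_lower[OF _ bdd] by force
    moreover have "lam F \<beta> t = ereal (Inf S)"
      unfolding lam_S by (rule ereal_Inf'[OF bdd False, symmetric])
    ultimately show ?thesis by (simp add: Ufun_def Vfun_def cdf_ext_def G_def)
  qed
qed

lemma lam_nonneg: "0 \<le> lam F \<beta> t"
  unfolding lam_def by (rule INF_greatest) simp

lemma cdf_ext_increment_le:
  fixes F :: "real \<Rightarrow> real" and l :: ereal
  assumes top: "(F \<longlongrightarrow> 1) at_top" and bot: "(F \<longlongrightarrow> 0) at_bot" and "0 \<le> l"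
    and le: "\<And>r. 0 \<le> r \<Longrightarrow> F (t + r) - F t \<le> F t - F (t - r)"
  shows "cdf_ext F (ereal t + l) - F t \<le> F t - cdf_ext F (ereal t - l)"
proof (cases l)
  case PInf
  have "1 - F t \<le> F t - 0"
    by (rule tendsto_le[OF _ tendsto_diff[OF tendsto_const tendsto_reflect_at_bot[OF bot, where t=t]]
          tendsto_diff[OF tendsto_shift_at_top[OF top, where t=t] tendsto_const]])
      (auto simp: eventually_at_top_linorder intro!: exI[of _ 0] dest: le)
  then show ?thesis by (simp add: PInf cdf_ext_def)
qed (use assms in \<open>auto simp: cdf_ext_def\<close>)

lemma cdf_ext_increment_ge:
  fixes F :: "real \<Rightarrow> real" and l :: ereal
  assumes top: "(F \<longlongrightarrow> 1) at_top" and bot: "(F \<longlongrightarrow> 0) at_bot" and "0 \<le> l"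
    and le: "\<And>r. 0 \<le> r \<Longrightarrow> F t - F (t - r) \<le> F (t + r) - F t"
  shows "F t - cdf_ext F (ereal t - l) \<le> cdf_ext F (ereal t + l) - F t"
proof (cases l)
  case PInf
  have "F t - 0 \<le> 1 - F t"
    by (rule tendsto_le[OF _ tendsto_diff[OF tendsto_shift_at_top[OF top, where t=t] tendsto_const]
          tendsto_diff[OF tendsto_const tendsto_reflect_at_bot[OF bot, where t=t]]])
      (auto simp: eventually_at_top_linorder intro!: exI[of _ 0] dest: le)
  then show ?thesis by (simp add: PInf cdf_ext_def)
qed (use assms in \<open>auto simp: cdf_ext_def\<close>)

lemma nn_integral_reflect_mono:
  fixes g :: "real \<Rightarrow> real"
  assumes "g \<in> borel_measurable borel" "B \<in> sets borel"
    and reflect: "\<And>y. 2 * c - y \<in> B \<longleftrightarrow> y \<in> A"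
    and le: "\<And>y. y \<in> A \<Longrightarrow> g y \<le> g (2 * c - y)"
  shows "(\<integral>\<^sup>+x. ennreal (g x) * indicator A x \<partial>lborel)
    \<le> (\<integral>\<^sup>+x. ennreal (g x) * indicator B x \<partial>lborel)"
proof -
  have "(\<integral>\<^sup>+x. ennreal (g x) * indicator A x \<partial>lborel)
      \<le> (\<integral>\<^sup>+x. ennreal (g (2 * c - x)) * indicator A x \<partial>lborel)"
    by (rule nn_integral_mono) (auto simp: indicator_def le ennreal_leI)
  also have "\<dots> = ennreal \<bar>-1\<bar> *
      (\<integral>\<^sup>+x. ennreal (g (2 * c + -1 * x)) * indicator B (2 * c + -1 * x) \<partial>lborel)"
    using reflect by (simp add: indicator_def)
  also have "\<dots> = (\<integral>\<^sup>+x. ennreal (g x) * indicator B x \<partial>lborel)"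
    using assms(1,2) by (intro nn_integral_real_affine[symmetric]) auto
  finally show ?thesis .
qed

lemma symmetric_antimono_abs_le:
  fixes g :: "real \<Rightarrow> real"
  assumes "\<And>s. g (- s) = g s" "antimono_on {0..} g" "\<bar>a\<bar> \<le> \<bar>b\<bar>"
  shows "g b \<le> g a"
proof -
  have "g \<bar>x\<bar> = g x" for x using assms(1)[of x] by (cases "0 \<le> x") auto
  moreover have "g \<bar>b\<bar> \<le> g \<bar>a\<bar>" using assms(2,3) by (auto simp: monotone_on_def)
  ultimately show ?thesis by metis
qed

context
  fixes N :: "real measure" and g :: "real \<Rightarrow> real"
  assumes distribution: "real_distribution N"
    and density: "N = density lborel (\<lambda>x. ennreal (g x))"
    and g_measurable: "g \<in> borel_measurable borel"
begin

interpretation real_distribution N by (rule distribution)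

lemma emeasure_density_eq:
  "A \<in> sets borel \<Longrightarrow> emeasure N A = (\<integral>\<^sup>+x. ennreal (g x) * indicator A x \<partial>lborel)"
  using g_measurable by (simp add: density emeasure_density)

lemma measure_singleton_density: "measure N {x} = 0"
  by (simp add: measure_def emeasure_density_eq nn_integral_null_set)

lemma isCont_cdf_density: "isCont (cdf N) x"
  using isCont_cdf measure_singleton_density by blast

lemma measure_atLeastAtMost_density:
  assumes "a \<le> b"
  shows "measure N {a..b} = cdf N b - cdf N a"
proof -
  have "{a..b} = {a<..b} \<union> {a}" using assms by auto
  then have "measure N {a..b} = measure N {a<..b}"
    using measure_Un_null_set[of "{a<..b}" N "{a}"] measure_singleton_density[of a]
    by (simp add: null_sets_def emeasure_eq_measure)
  then show ?thesis using cdf_diff_eq[of a b] assms by (cases "a = b") auto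
qed

lemma measure_reflect_interval_le:
  assumes le: "\<And>y. y \<in> {a..b} \<Longrightarrow> g y \<le> g (2 * c - y)"
  shows "measure N {a..b} \<le> measure N {2 * c - b..2 * c - a}"
proof -
  have "emeasure N {a..b} \<le> emeasure N {2 * c - b..2 * c - a}"
    unfolding emeasure_density_eq[OF borel_closed[OF closed_atLeastAtMost]]
    by (intro nn_integral_reflect_mono[where c = c] g_measurable le) auto
  then show ?thesis by (simp add: emeasure_eq_measure)
qed

context
  assumes symmetric: "\<And>s. g (- s) = g s" and unimodal: "antimono_on {0..} g"
begin

lemma cdf_increment_right_le_left:
  assumes "0 \<le> t" "0 \<le> l"
  shows "cdf N (t + l) - cdf N t \<le> cdf N t - cdf N (t - l)"
proof -
  have "measure N {t..t + l} \<le> measure N {2 * t - (t + l)..2 * t - t}"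
    using assms by (intro measure_reflect_interval_le
        symmetric_antimono_abs_le[OF symmetric unimodal]) auto
  then show ?thesis using assms by (simp add: measure_atLeastAtMost_density)
qed

lemma cdf_increment_left_le_right:
  assumes "t \<le> 0" "0 \<le> l"
  shows "cdf N t - cdf N (t - l) \<le> cdf N (t + l) - cdf N t"
proof -
  have "measure N {t - l..t} \<le> measure N {2 * t - t..2 * t - (t - l)}"
    using assms by (intro measure_reflect_interval_le
        symmetric_antimono_abs_le[OF symmetric unimodal]) auto
  then show ?thesis using assms by (simp add: measure_atLeastAtMost_density)
qed

end

end

theorem mainTheorem10:
  fixes M :: "'a measure" and X :: "'a \<Rightarrow> real" and g :: "real \<Rightarrow> real"
    and \<beta> t :: real
  assumes "prob_space M"
    and "distributed M lborel X (\<lambda>x. ennreal (g x))"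
    and "\<And>x. g x \<ge> 0"
    and "\<And>s. g (- s) = g s"
    and "antimono_on {0..} g"
    and "0 < \<beta>" and "\<beta> \<le> 1"
  shows "(t \<ge> 0 \<longrightarrow>
            Ufun (cdf (distr M lborel X)) \<beta> t \<le> \<beta> / 2 \<and>
            \<beta> / 2 \<le> Vfun (cdf (distr M lborel X)) \<beta> t)
       \<and> (t \<le> 0 \<longrightarrow>
            Vfun (cdf (distr M lborel X)) \<beta> t \<le> \<beta> / 2 \<and>
            \<beta> / 2 \<le> Ufun (cdf (distr M lborel X)) \<beta> t)"
proof -
  let ?N = "distr M lborel X" and ?F = "cdf (distr M lborel X)"
  interpret M: prob_space M by (rule assms(1))
  have X_measurable: "X \<in> measurable M lborel" using assms(2) by (rule distributed_measurable)
  interpret N: real_distribution ?N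
    using M.prob_space_distr[OF X_measurable]
    by (simp add: real_distribution_def real_distribution_axioms_def)
  have density: "?N = density lborel (\<lambda>x. ennreal (g x))"
    using assms(2) by (rule distributed_distr_eq_density)
  have g_measurable: "g \<in> borel_measurable borel"
    using distributed_real_measurable[OF _ assms(2)] assms(3) by simp
  note N_density = N.real_distribution_axioms density g_measurable
  have "Ufun ?F \<beta> t + Vfun ?F \<beta> t = \<beta>"
    using isCont_cdf_density[OF N_density] assms(6,7)
    by (intro Ufun_plus_Vfun N.cdf_nondecreasing N.cdf_lim_at_top_prob N.cdf_lim_at_bot
        continuous_at_imp_continuous_on monoI) auto
  moreover have "t \<ge> 0 \<Longrightarrow> Ufun ?F \<beta> t \<le> Vfun ?F \<beta> t"
    unfolding Ufun_def Vfun_def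
    by (intro cdf_ext_increment_le N.cdf_lim_at_top_prob N.cdf_lim_at_bot lam_nonneg
        cdf_increment_right_le_left[OF N_density assms(4,5)])
  moreover have "t \<le> 0 \<Longrightarrow> Vfun ?F \<beta> t \<le> Ufun ?F \<beta> t"
    unfolding Ufun_def Vfun_def
    by (intro cdf_ext_increment_ge N.cdf_lim_at_top_prob N.cdf_lim_at_bot lam_nonneg
        cdf_increment_left_le_right[OF N_density assms(4,5)])
  ultimately show ?thesis by linarith
qed

end
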